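(* Let $W$ be the Witt algebra with basis $\{x_n\mid n\in\mathbb{Z}\}$ and bracket $[x_m,x_n]=(n-m)x_{m+n}$, and let $V$ be a left-symmetric algebra structure on the underlying space of $W$ with product $x_mx_n=f(m,n)x_{m+n}$ for some $f:\mathbb{Z}\times\mathbb{Z}\to\mathbb{C}$ and with $x_mx_n-x_nx_m=(n-m)x_{m+n}$. Then $V$, regarded as a $W$-module via left multiplication, is indecomposable, i.e. it is not a direct sum of two proper submodules.
   Context: A left-symmetric algebra is a vector space with bilinear product satisfying $(xy)z-x(yz)=(yx)z-y(xz)$; left multiplication gives a representation of the commutator Lie algebra. *)

theory Defs
  imports Complex_Main
begin

text \<open>The underlying space of the Witt algebra: finitely supported functions
  v : int -> complex, v k being the coefficient of the basis vector x_k.\<close>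

definition fsupp :: "(int \<Rightarrow> complex) \<Rightarrow> bool" where
  "fsupp v \<longleftrightarrow> finite {k. v k \<noteq> 0}"

definition Vspace :: "(int \<Rightarrow> complex) set" where
  "Vspace = {v. fsupp v}"

text \<open>Basis-level conditions on the structure constants f, where x_m x_n = f m n x_(m+n).
  Left-symmetry: (x_a x_b) x_c - x_a (x_b x_c) = (x_b x_a) x_c - x_b (x_a x_c).\<close>

definition left_symmetric :: "(int \<Rightarrow> int \<Rightarrow> complex) \<Rightarrow> bool" where
  "left_symmetric f \<longleftrightarrow> (\<forall>a b c.
     f a b * f (a + b) c - f b c * f a (b + c) = f b a * f (a + b) c - f a c * f b (a + c))"

definition witt_commutator :: "(int \<Rightarrow> int \<Rightarrow> complex) \<Rightarrow> bool" where
  "witt_commutator f \<longleftrightarrow> (\<forall>m n. f m n - f n m = of_int (n - m))"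

text \<open>Left multiplication by the basis element x_m on v = sum_k v k x_k:
  x_m v = sum_j v j f m j x_(m+j).\<close>

definition lmult :: "(int \<Rightarrow> int \<Rightarrow> complex) \<Rightarrow> int \<Rightarrow> (int \<Rightarrow> complex) \<Rightarrow> (int \<Rightarrow> complex)" where
  "lmult f m v = (\<lambda>k. f m (k - m) * v (k - m))"

text \<open>W-submodule of V (W acting by left multiplication; by linearity it suffices
  to require closure under the action of the basis elements x_m).\<close>

definition is_submodule :: "(int \<Rightarrow> int \<Rightarrow> complex) \<Rightarrow> (int \<Rightarrow> complex) set \<Rightarrow> bool" where
  "is_submodule f U \<longleftrightarrow>
     U \<subseteq> Vspace \<and> (\<lambda>_. 0) \<in> U \<and>
     (\<forall>u\<in>U. \<forall>w\<in>U. (\<lambda>k. u k + w k) \<in> U) \<and>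
     (\<forall>c. \<forall>u\<in>U. (\<lambda>k. c * u k) \<in> U) \<and>
     (\<forall>m. \<forall>u\<in>U. lmult f m u \<in> U)"

definition indecomposable :: "(int \<Rightarrow> int \<Rightarrow> complex) \<Rightarrow> bool" where
  "indecomposable f \<longleftrightarrow> \<not> (\<exists>U1 U2.
     is_submodule f U1 \<and> is_submodule f U2 \<and>
     U1 \<noteq> Vspace \<and> U2 \<noteq> Vspace \<and>
     U1 \<inter> U2 = {\<lambda>_. 0} \<and>
     Vspace = {(\<lambda>k. u k + w k) | u w. u \<in> U1 \<and> w \<in> U2})"

end

theory Submission
  imports Defs
begin

text \<open>Put \<open>c = f 0 0\<close>. Left-symmetry with one index \<open>0\<close> shows that each \<open>f n 0\<close> is \<open>0\<close> or \<open>c\<close>,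
  and that \<open>f a b \<noteq> 0\<close> forces \<open>f (a + b) 0 = f b 0\<close>. If \<open>f j 0 = 0\<close> although \<open>c \<noteq> 0\<close>, this
  makes \<open>f\<close> vanish at \<open>(-j, j)\<close>, \<open>(-2j, j)\<close>, \<open>(2j, -j)\<close>, and four more instances of the identity
  then give \<open>8c = -5j\<close>; since the vanishing propagates from \<open>j\<close> to \<open>2j\<close>, this is absurd.
  Hence \<open>x\<^sub>n x\<^sub>0 = c x\<^sub>n\<close> for all \<open>n\<close>, so \<open>x\<^sub>0\<close> acts diagonally with the distinct eigenvalues
  \<open>k + c\<close>, and in a decomposition \<open>V = U\<^sub>1 \<oplus> U\<^sub>2\<close> every basis vector lies in one summand, say
  \<open>x\<^sub>0 \<in> U\<^sub>1\<close>. A basis vector \<open>x\<^sub>j \<in> U\<^sub>2\<close> would give \<open>c x\<^sub>j = x\<^sub>j x\<^sub>0 \<in> U\<^sub>1 \<inter> U\<^sub>2\<close>, so \<open>c = 0\<close>,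
  and the same separation argument provides exactly the vanishing needed for \<open>0 = 8c = -5j\<close>.\<close>

locale witt_lsa =
  fixes f :: "int \<Rightarrow> int \<Rightarrow> complex"
  assumes left_symmetric: "left_symmetric f"
    and witt_commutator: "witt_commutator f"
begin

lemma commutator: "f m n = f n m + of_int (n - m)"
  using witt_commutator unfolding witt_commutator_def by (metis diff_add_cancel add.commute)

lemma left_symmetric_identity: "of_int (b - a) * f (a + b) c = f b c * f a (b + c) - f a c * f b (a + c)"
proof -
  have "f a b * f (a + b) c - f b c * f a (b + c) = f b a * f (a + b) c - f a c * f b (a + c)"
    using left_symmetric unfolding left_symmetric_def by blast
  moreover have "of_int (b - a) = f a b - f b a"
    using commutator[of a b] by simp
  ultimately show ?thesis by (simp only: left_diff_distrib) (simp add: algebra_simps)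
qed

text \<open>Indices as separate variables, so that \<open>rule\<close> matches instances such as \<open>f 0 j\<close> for \<open>a = -j, b = j\<close>.\<close>

lemma left_symmetric_identity_at:
  assumes "d = b - a" "p = a + b" "q = b + c" "r = a + c"
  shows "of_int d * f p c = f b c * f a q - f a c * f b r"
  using left_symmetric_identity assms by simp

lemma right_x0_cases: "f b 0 = 0 \<or> f b 0 = f 0 0"
proof -
  have "of_int b * f b 0 = f b 0 * f 0 b - f 0 0 * f b 0"
    by (rule left_symmetric_identity_at) simp_all
  then have "f b 0 * (f b 0 - f 0 0) = 0"
    using commutator[of 0 b] by (auto simp: algebra_simps)
  then show ?thesis by simp
qed

lemma structure_const_eq_0_if_right_x0_differs:
  assumes "f (b + c) 0 \<noteq> f c 0"
  shows "f b c = 0"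
proof -
  have "of_int b * f b c = f b c * f 0 (b + c) - f 0 c * f b c"
    by (rule left_symmetric_identity_at) simp_all
  then have "f b c * (f (b + c) 0 - f c 0) = 0"
    using commutator[of 0 c] commutator[of 0 "b + c"] by (auto simp: algebra_simps)
  with assms show ?thesis by simp
qed

lemma eight_f00_eq:
  assumes j: "j \<noteq> 0" and "f j 0 = 0" and fmj0: "f (-j) 0 = f 0 0"
    and z1: "f (-j) j = 0" and z2: "f (-(2*j)) j = 0" and z3: "f (2*j) (-j) = 0"
  shows "8 * f 0 0 = -5 * of_int j" and "3 * f j j = 2 * of_int j"
proof -
  define J where "J = (of_int j :: complex)"
  have J: "J \<noteq> 0" using j by (simp add: J_def)
  have of_int_J: "of_int (2*j) = 2*J" "of_int (-3*j) = -3*J" by (simp_all add: J_def)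
  have comm: "f j (-j) = -2*J" "f j (-(2*j)) = -3*J" "f (-j) (2*j) = 3*J"
    "f 0 j = J" "f 0 (-j) = f 0 0 - J" "f (2*j) (-(2*j)) = f (-(2*j)) (2*j) - 4*J"
    using assms commutator[of j "-j"] commutator[of j "-(2*j)"] commutator[of "-j" "2*j"]
      commutator[of 0 j] commutator[of 0 "-j"] commutator[of "2*j" "-(2*j)"]
    by (simp_all add: J_def)
  have "of_int (2*j) * f 0 j = f j j * f (-j) (2*j) - f (-j) j * f j 0"
    by (rule left_symmetric_identity_at) simp_all
  then have "2*J * J = f j j * (3*J)"
    unfolding of_int_J comm z1 by simp
  then show fjj: "3 * f j j = 2 * of_int j"
    using J by (simp add: J_def algebra_simps)
  have "of_int (-3*j) * f (-j) j = f (-(2*j)) j * f j (-j) - f j j * f (-(2*j)) (2*j)"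
    by (rule left_symmetric_identity_at) simp_all
  moreover have "f j j \<noteq> 0"
    using fjj j by auto
  ultimately have z4: "f (-(2*j)) (2*j) = 0"
    unfolding z1 z2 by simp
  have "of_int (-3*j) * f j (-j) = f (-j) (-j) * f (2*j) (-(2*j)) - f (2*j) (-j) * f (-j) j"
    by (rule left_symmetric_identity_at) simp_all
  then have "J * (2 * f (-j) (-j) + 3 * J) = 0"
    unfolding of_int_J comm z3 z4 by algebra
  then have fmjmj: "2 * f (-j) (-j) = -3 * J"
    using J by (simp add: eq_neg_iff_add_eq_0)
  have "of_int (2*j) * f 0 (-j) = f j (-j) * f (-j) 0 - f (-j) (-j) * f j (-(2*j))"
    by (rule left_symmetric_identity_at) simp_all
  then have "2*J * (f 0 0 - J) = -2*J * f 0 0 - f (-j) (-j) * (-3*J)"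
    unfolding of_int_J comm fmj0 by simp
  with fmjmj have "J * (8 * f 0 0 + 5 * J) = 0"
    by algebra
  then show "8 * f 0 0 = -5 * of_int j"
    using J by (simp add: J_def eq_neg_iff_add_eq_0)
qed

lemma right_x0_zero_doubles:
  assumes c: "f 0 0 \<noteq> 0" and j: "f j 0 = 0"
  shows "8 * f 0 0 = -5 * of_int j" and "f (2*j) 0 = 0"
proof -
  have j0: "j \<noteq> 0" using c j by auto
  have mj: "f (-j) 0 = f 0 0"
  proof (rule ccontr)
    assume "f (-j) 0 \<noteq> f 0 0"
    then have "f (-j) 0 = 0" using right_x0_cases by blast
    moreover have "of_int (2*j) * f 0 0 = f j 0 * f (-j) j - f (-j) 0 * f j (-j)"
      by (rule left_symmetric_identity_at) simp_all
    ultimately show False using c j j0 by simp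
  qed
  have "f (-j) j = 0"
    using structure_const_eq_0_if_right_x0_differs[of "-j" j] c j by simp
  moreover have "f (-(2*j)) j = 0"
    using structure_const_eq_0_if_right_x0_differs[of "-(2*j)" j] c j mj by simp
  moreover have "f (2*j) (-j) = 0"
    using structure_const_eq_0_if_right_x0_differs[of "2*j" "-j"] c j mj by simp
  ultimately have "8 * f 0 0 = -5 * of_int j" and "3 * f j j = 2 * of_int j"
    using eight_f00_eq[OF j0 j mj] by auto
  moreover have "f j j \<noteq> 0"
    using \<open>3 * f j j = 2 * of_int j\<close> j0 by auto
  then have "f (2*j) 0 = f j 0"
    using structure_const_eq_0_if_right_x0_differs[of j j] by (metis mult_2)
  ultimately show "8 * f 0 0 = -5 * of_int j" and "f (2*j) 0 = 0"
    using j by simp_all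
qed

lemma right_x0_const: "f n 0 = f 0 0"
proof (rule ccontr)
  assume n: "f n 0 \<noteq> f 0 0"
  then have "f n 0 = 0" using right_x0_cases by blast
  moreover have "f 0 0 \<noteq> 0" using n \<open>f n 0 = 0\<close> by simp
  ultimately have "8 * f 0 0 = -5 * of_int n" and "8 * f 0 0 = -5 * of_int (2*n)"
    using right_x0_zero_doubles by blast+
  then have "n = 0" by simp
  with n show False by simp
qed

lemma left_x0_eigenvalue: "f 0 k = of_int k + f 0 0"
  using commutator[of 0 k] right_x0_const[of k] by simp

end

definition basis_vector :: "int \<Rightarrow> int \<Rightarrow> complex" where
  "basis_vector n = (\<lambda>k. if k = n then 1 else 0)"

lemma basis_vector_in_Vspace: "basis_vector n \<in> Vspace"
  unfolding Vspace_def fsupp_def basis_vector_def by simp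

lemma lmult_basis_vector: "lmult f m (basis_vector n) = (\<lambda>k. f m n * basis_vector (m + n) k)"
  unfolding lmult_def basis_vector_def by auto

lemma submodule_subset: "is_submodule f U \<Longrightarrow> U \<subseteq> Vspace"
  and submodule_zero: "is_submodule f U \<Longrightarrow> (\<lambda>_. 0) \<in> U"
  and submodule_add: "is_submodule f U \<Longrightarrow> u \<in> U \<Longrightarrow> w \<in> U \<Longrightarrow> (\<lambda>k. u k + w k) \<in> U"
  and submodule_scale: "is_submodule f U \<Longrightarrow> u \<in> U \<Longrightarrow> (\<lambda>k. c * u k) \<in> U"
  and submodule_lmult: "is_submodule f U \<Longrightarrow> u \<in> U \<Longrightarrow> lmult f m u \<in> U"
  unfolding is_submodule_def by blast+

lemma submodule_eq_VspaceI:
  assumes U: "is_submodule f U" and basis: "\<And>n. basis_vector n \<in> U"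
  shows "U = Vspace"
proof
  show "U \<subseteq> Vspace" using U by (rule submodule_subset)
  have "v \<in> U" if "finite S" "{k. v k \<noteq> 0} \<subseteq> S" for S v
    using that
  proof (induction S arbitrary: v rule: finite_induct)
    case empty
    then have "v = (\<lambda>_. 0)" by auto
    then show ?case using U by (simp add: submodule_zero)
  next
    case (insert a S)
    define v' where "v' = (\<lambda>k. if k = a then 0 else v k)"
    have "v' \<in> U" using insert by (intro insert.IH) (auto simp: v'_def)
    then have "(\<lambda>k. v a * basis_vector a k + v' k) \<in> U"
      using U basis by (intro submodule_add submodule_scale)
    moreover have "(\<lambda>k. v a * basis_vector a k + v' k) = v"
      by (auto simp: v'_def basis_vector_def)
    ultimately show ?case by simp
  qed
  then show "Vspace \<subseteq> U" unfolding Vspace_def fsupp_def by blast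
qed

lemma structure_const_eq_0_if_separated:
  assumes X: "is_submodule f X" and Y: "is_submodule f Y" and XY: "X \<inter> Y = {\<lambda>_. 0}"
    and a: "basis_vector a \<in> X" and ma: "basis_vector (m + a) \<in> Y"
  shows "f m a = 0"
proof -
  have "lmult f m (basis_vector a) \<in> X" using X a by (rule submodule_lmult)
  moreover have "lmult f m (basis_vector a) \<in> Y"
    unfolding lmult_basis_vector using Y ma by (rule submodule_scale)
  ultimately have "lmult f m (basis_vector a) = (\<lambda>_. 0)" using XY by blast
  then have "lmult f m (basis_vector a) (m + a) = 0" by simp
  then show ?thesis by (simp add: lmult_def basis_vector_def)
qed

text \<open>\<open>lmult f 0\<close> is diagonal, so \<open>x\<^sub>0 u - f 0 n u\<close> lies in \<open>U\<^sub>1 \<inter> U\<^sub>2\<close>; distinct eigenvalues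
  then confine the support of \<open>u\<close> to \<open>{n}\<close>.\<close>

lemma basis_vector_in_summand:
  assumes U1: "is_submodule f U1" and U2: "is_submodule f U2" and U12: "U1 \<inter> U2 = {\<lambda>_. 0}"
    and inj: "inj (f 0)"
    and n: "basis_vector n = (\<lambda>k. u k + w k)" and u: "u \<in> U1" and w: "w \<in> U2"
  shows "basis_vector n \<in> U1 \<or> basis_vector n \<in> U2"
proof -
  define du where "du = (\<lambda>k. lmult f 0 u k + (- f 0 n) * u k)"
  define dw where "dw = (\<lambda>k. lmult f 0 w k + (- f 0 n) * w k)"
  have "du \<in> U1" unfolding du_def using U1 u by (intro submodule_add submodule_lmult submodule_scale)
  have "dw \<in> U2" unfolding dw_def using U2 w by (intro submodule_add submodule_lmult submodule_scale)
  have "du = (\<lambda>k. (-1) * dw k)"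
  proof
    fix k
    have "(f 0 k - f 0 n) * (u k + w k) = 0"
      using fun_cong[OF n, of k] by (cases "k = n") (auto simp: basis_vector_def)
    then show "du k = (-1) * dw k" unfolding du_def dw_def lmult_def by (simp add: algebra_simps)
  qed
  then have "du \<in> U2" using submodule_scale[OF U2 \<open>dw \<in> U2\<close>, of "-1"] by simp
  with \<open>du \<in> U1\<close> U12 have du0: "du = (\<lambda>_. 0)" by blast
  have u_supp: "u k = 0" if "k \<noteq> n" for k
  proof -
    have "(f 0 k - f 0 n) * u k = 0"
      using fun_cong[OF du0, of k] by (simp add: du_def lmult_def algebra_simps)
    moreover have "f 0 k \<noteq> f 0 n" using inj that by (metis injD)
    ultimately show ?thesis by simp
  qed
  show ?thesis
  proof (cases "u n = 0")
    case True
    then have "u = (\<lambda>_. 0)" using u_supp by (metis ext)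
    then have "w = basis_vector n" using n by simp
    then show ?thesis using w by simp
  next
    case False
    have "basis_vector n = (\<lambda>k. (1 / u n) * u k)"
      using u_supp False by (auto simp: basis_vector_def)
    moreover have "(\<lambda>k. (1 / u n) * u k) \<in> U1" using U1 u by (rule submodule_scale)
    ultimately show ?thesis by simp
  qed
qed

context witt_lsa
begin

lemma inj_left_x0: "inj (f 0)"
proof (rule injI)
  fix k l
  assume "f 0 k = f 0 l"
  then show "k = l" using left_x0_eigenvalue[of k] left_x0_eigenvalue[of l] by simp
qed

lemma submodule_eq_Vspace_if_basis_vector_0:
  assumes U1: "is_submodule f U1" and U2: "is_submodule f U2" and U12: "U1 \<inter> U2 = {\<lambda>_. 0}"
    and split: "\<And>n. basis_vector n \<in> U1 \<or> basis_vector n \<in> U2"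
    and x0: "basis_vector 0 \<in> U1"
  shows "U1 = Vspace"
proof (rule submodule_eq_VspaceI[OF U1], rule ccontr)
  fix j
  assume "basis_vector j \<notin> U1"
  with split have xj: "basis_vector j \<in> U2" by blast
  have U21: "U2 \<inter> U1 = {\<lambda>_. 0}" using U12 by blast
  have "f j 0 = 0"
    using structure_const_eq_0_if_separated[OF U1 U2 U12 x0, of j] xj by simp
  then have c: "f 0 0 = 0" and fj: "f j 0 = 0" using right_x0_const[of j] by simp_all
  have j: "j \<noteq> 0" using x0 \<open>basis_vector j \<notin> U1\<close> by auto
  have z1: "f (-j) j = 0"
    using structure_const_eq_0_if_separated[OF U2 U1 U21 xj, of "-j"] x0 by simp
  have x_minus_j: "basis_vector (-j) \<in> U1"
  proof (rule ccontr)
    assume "basis_vector (-j) \<notin> U1"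
    with split have "basis_vector (-j) \<in> U2" by blast
    then have "f j (-j) = 0"
      using structure_const_eq_0_if_separated[OF U2 U1 U21, of "-j" j] x0 by simp
    then show False using commutator[of j "-j"] z1 j by simp
  qed
  have "f (-(2*j)) j = 0"
    using structure_const_eq_0_if_separated[OF U2 U1 U21 xj, of "-(2*j)"] x_minus_j by simp
  moreover have "f (2*j) (-j) = 0"
    using structure_const_eq_0_if_separated[OF U1 U2 U12 x_minus_j, of "2*j"] xj by simp
  ultimately have "8 * f 0 0 = -5 * of_int j"
    using eight_f00_eq(1)[OF j fj] z1 right_x0_const[of "-j"] by simp
  with c j show False by simp
qed

end

theorem lemma3p3:
  fixes f :: "int \<Rightarrow> int \<Rightarrow> complex"
  assumes "left_symmetric f"
    and "witt_commutator f"
  shows "indecomposable f"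
  unfolding indecomposable_def
proof (intro notI, elim exE conjE)
  interpret witt_lsa f using assms by unfold_locales
  fix U1 U2
  assume U1: "is_submodule f U1" and U2: "is_submodule f U2"
    and proper: "U1 \<noteq> Vspace" "U2 \<noteq> Vspace" and U12: "U1 \<inter> U2 = {\<lambda>_. 0}"
    and sum: "Vspace = {(\<lambda>k. u k + w k) | u w. u \<in> U1 \<and> w \<in> U2}"
  have split: "basis_vector n \<in> U1 \<or> basis_vector n \<in> U2" for n
    using basis_vector_in_summand[OF U1 U2 U12 inj_left_x0] basis_vector_in_Vspace[of n]
    unfolding sum by blast
  have split': "basis_vector n \<in> U2 \<or> basis_vector n \<in> U1" for n
    using split by blast
  have U21: "U2 \<inter> U1 = {\<lambda>_. 0}" using U12 by blast
  have "U1 = Vspace \<or> U2 = Vspace"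
    using submodule_eq_Vspace_if_basis_vector_0[OF U1 U2 U12 split]
      submodule_eq_Vspace_if_basis_vector_0[OF U2 U1 U21 split'] split[of 0] by blast
  with proper show False by blast
qed

end
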